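(* For mv-ATL$_\to$, memory is irrelevant, i.e., its semantics can be equivalently given by memoryless strategies.
   Context: Let $\mathcal{L}=(L,\leq)$ be a finite distributive lattice with meet $\sqcap$, join $\sqcup$, least element $\bot$ and greatest element $\top$; for a family of elements, $\inf$ denotes its greatest lower bound (lattice meet) and $\bigsqcup$ its least upper bound (lattice join). A multi-valued concurrent game structure (mv-CGS) over $\mathcal{L}$ is a concurrent game structure $\langle \mathrm{Agt},Q,Act,d,t,AP,V,(L,\leq,\sigma)\rangle$ whose valuation $V:AP\times Q\to L$ assigns lattice values to atomic propositions at states (perfect information). mv-ATL$_\to$ has formulas $\varphi::=c\mid p\mid\varphi\wedge\varphi\mid\varphi\vee\varphi\mid\varphi\to\varphi\mid\langle\!\langle A\rangle\!\rangle X\varphi\mid\langle\!\langle A\rangle\!\rangle\varphi U\varphi\mid\langle\!\langle A\rangle\!\rangle\varphi W\varphi$ (and the dual $[\![A]\!]$ forms), interpreted with $\wedge,\vee$ as $\sqcap,\sqcup$, $[\![\langle\!\langle A\rangle\!\rangle\gamma]\!]_{M,q}=\bigsqcup_{s_A\in\Sigma_A}\inf_{\lambda\in out(q,s_A)}[\![\gamma]\!]_{M,\lambda}$, $[\![[\![A]\!]\gamma]\!]_{M,q}=\inf_{s_A\in\Sigma_A}\bigsqcup_{\lambda\in out(q,s_A)}[\![\gamma]\!]_{M,\lambda}$, $[\![\varphi_1 U\varphi_2]\!]_{M,\lambda}=\bigsqcup_{i\ge 0}\inf_{0\le j<i}\{[\![\varphi_2]\!]_{M,\lambda[i]}\sqcap[\![\varphi_1]\!]_{M,\lambda[j]}\}$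 (analogously for $X$, $W$), and $[\![\varphi_1\to\varphi_2]\!]_{M,q}=\top$ if $[\![\varphi_1]\!]_{M,q}\le[\![\varphi_2]\!]_{M,q}$ and $\bot$ otherwise. $\Sigma_A$ is either the set of perfect recall strategies ($s_a:Q^+\to Act$) or the set of memoryless strategies ($s_a:Q\to Act$), with $s_a$ choosing actions available to $a$. The claim is that both choices of $\Sigma_A$ give the same valuation. This follows from a reduction of multi-valued model checking to 2-valued model checking (via threshold functions on join-irreducible elements, plus fresh propositions for implication subformulas) that is correct independently of the strategy type, together with the fact that perfect recall and memoryless semantics coincide in 2-valued ATL. *)

theory Defs
  imports Main "HOL-Library.Finite_Lattice"
begin

record ('a, 's, 'act, 'p, 'l) mvcgs =
  avail :: "'a \<Rightarrow> 's \<Rightarrow> 'act set"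
  trans :: "'s \<Rightarrow> ('a \<Rightarrow> 'act) \<Rightarrow> 's"
  val   :: "'p \<Rightarrow> 's \<Rightarrow> 'l"

definition wf_mvcgs :: "('a, 's, 'act, 'p, 'l) mvcgs \<Rightarrow> bool" where
  "wf_mvcgs M \<longleftrightarrow> (\<forall>a q. avail M a q \<noteq> {})"

datatype ('a, 'p, 'l) mvatl =
    Const 'l
  | Prop 'p
  | And "('a, 'p, 'l) mvatl" "('a, 'p, 'l) mvatl"
  | Or  "('a, 'p, 'l) mvatl" "('a, 'p, 'l) mvatl"
  | Imp "('a, 'p, 'l) mvatl" "('a, 'p, 'l) mvatl"
  | CoopX "'a set" "('a, 'p, 'l) mvatl"
  | CoopU "'a set" "('a, 'p, 'l) mvatl" "('a, 'p, 'l) mvatl"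
  | CoopW "'a set" "('a, 'p, 'l) mvatl" "('a, 'p, 'l) mvatl"
  | DualX "'a set" "('a, 'p, 'l) mvatl"
  | DualU "'a set" "('a, 'p, 'l) mvatl" "('a, 'p, 'l) mvatl"
  | DualW "'a set" "('a, 'p, 'l) mvatl" "('a, 'p, 'l) mvatl"

text \<open>Strategy profiles of a coalition are represented uniformly as functions
from agents and nonempty histories (state lists, last element = current state) to actions.\<close>

definition pr_strats :: "('a, 's, 'act, 'p, 'l) mvcgs \<Rightarrow> 'a set \<Rightarrow> ('a \<Rightarrow> 's list \<Rightarrow> 'act) set" where
  "pr_strats M A = {s. \<forall>a\<in>A. \<forall>h. h \<noteq> [] \<longrightarrow> s a h \<in> avail M a (last h)}"

definition ml_strats :: "('a, 's, 'act, 'p, 'l) mvcgs \<Rightarrow> 'a set \<Rightarrow> ('a \<Rightarrow> 's list \<Rightarrow> 'act) set" where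
  "ml_strats M A = {(\<lambda>a h. f a (last h)) | f. \<forall>a\<in>A. \<forall>q. f a q \<in> avail M a q}"

definition strats :: "('a, 's, 'act, 'p, 'l) mvcgs \<Rightarrow> bool \<Rightarrow> 'a set \<Rightarrow> ('a \<Rightarrow> 's list \<Rightarrow> 'act) set" where
  "strats M perfect_recall A = (if perfect_recall then pr_strats M A else ml_strats M A)"

definition outcomes :: "('a, 's, 'act, 'p, 'l) mvcgs \<Rightarrow> 'a set \<Rightarrow> 's \<Rightarrow> ('a \<Rightarrow> 's list \<Rightarrow> 'act) \<Rightarrow> (nat \<Rightarrow> 's) set" where
  "outcomes M A q s = {\<rho>. \<rho> 0 = q \<and>
     (\<forall>i. \<exists>\<alpha>. (\<forall>a. \<alpha> a \<in> avail M a (\<rho> i)) \<and>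
               (\<forall>a\<in>A. \<alpha> a = s a (map \<rho> [0..<Suc i])) \<and>
               \<rho> (Suc i) = trans M (\<rho> i) \<alpha>)}"

definition path_next :: "('s \<Rightarrow> 'l::complete_lattice) \<Rightarrow> (nat \<Rightarrow> 's) \<Rightarrow> 'l" where
  "path_next f \<rho> = f (\<rho> 1)"

definition path_until :: "('s \<Rightarrow> 'l::complete_lattice) \<Rightarrow> ('s \<Rightarrow> 'l) \<Rightarrow> (nat \<Rightarrow> 's) \<Rightarrow> 'l" where
  "path_until f1 f2 \<rho> = (SUP i. inf (f2 (\<rho> i)) (INF j\<in>{..<i}. f1 (\<rho> j)))"

definition path_weak :: "('s \<Rightarrow> 'l::complete_lattice) \<Rightarrow> ('s \<Rightarrow> 'l) \<Rightarrow> (nat \<Rightarrow> 's) \<Rightarrow> 'l" where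
  "path_weak f1 f2 \<rho> = sup (path_until f1 f2 \<rho>) (INF i. f1 (\<rho> i))"

definition coop :: "('a, 's, 'act, 'p, 'l::complete_lattice) mvcgs \<Rightarrow> bool \<Rightarrow> 'a set
                    \<Rightarrow> ((nat \<Rightarrow> 's) \<Rightarrow> 'l) \<Rightarrow> 's \<Rightarrow> 'l" where
  "coop M pr A \<gamma> q = (SUP s\<in>strats M pr A. INF \<rho>\<in>outcomes M A q s. \<gamma> \<rho>)"

definition dual :: "('a, 's, 'act, 'p, 'l::complete_lattice) mvcgs \<Rightarrow> bool \<Rightarrow> 'a set
                    \<Rightarrow> ((nat \<Rightarrow> 's) \<Rightarrow> 'l) \<Rightarrow> 's \<Rightarrow> 'l" where
  "dual M pr A \<gamma> q = (INF s\<in>strats M pr A. SUP \<rho>\<in>outcomes M A q s. \<gamma> \<rho>)"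

primrec sem :: "('a, 's, 'act, 'p, 'l::finite_distrib_lattice_complete) mvcgs \<Rightarrow> bool
                 \<Rightarrow> ('a, 'p, 'l) mvatl \<Rightarrow> 's \<Rightarrow> 'l" where
  "sem M pr (Const c) q = c"
| "sem M pr (Prop p) q = val M p q"
| "sem M pr (And \<phi> \<psi>) q = inf (sem M pr \<phi> q) (sem M pr \<psi> q)"
| "sem M pr (Or \<phi> \<psi>) q = sup (sem M pr \<phi> q) (sem M pr \<psi> q)"
| "sem M pr (Imp \<phi> \<psi>) q = (if sem M pr \<phi> q \<le> sem M pr \<psi> q then top else bot)"
| "sem M pr (CoopX A \<phi>) q = coop M pr A (path_next (sem M pr \<phi>)) q"
| "sem M pr (CoopU A \<phi> \<psi>) q = coop M pr A (path_until (sem M pr \<phi>) (sem M pr \<psi>)) q"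
| "sem M pr (CoopW A \<phi> \<psi>) q = coop M pr A (path_weak (sem M pr \<phi>) (sem M pr \<psi>)) q"
| "sem M pr (DualX A \<phi>) q = dual M pr A (path_next (sem M pr \<phi>)) q"
| "sem M pr (DualU A \<phi> \<psi>) q = dual M pr A (path_until (sem M pr \<phi>) (sem M pr \<psi>)) q"
| "sem M pr (DualW A \<phi> \<psi>) q = dual M pr A (path_weak (sem M pr \<phi>) (sem M pr \<psi>)) q"

end

theory Submission
  imports Defs
begin

text \<open>A join-prime element j of the finite distributive lattice turns the multi-valued semantics
into a two-valued one: j is below the value of a strategic formula iff the coalition has a
strategy all of whose outcomes satisfy the threshold objective \<open>\<lambda>\<rho>. j \<le> \<gamma> \<rho>\<close> (for the dual
modality: iff it has none for the complementary objective), and for next, until and weak until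
the threshold objective is again a next, until or weak until objective over the threshold
predicates \<open>\<lambda>q. j \<le> f q\<close>. For these two-valued objectives memoryless strategies are as good as
perfect-recall ones: one controlled step suffices for next, staying in the winning region
suffices for weak until (a safety game), and descending the attractor stages suffices for until
(a reachability game). Since every lattice element is the join of the join-primes below it,
both semantics agree on every formula.\<close>

section \<open>Join-prime elements\<close>

text \<open>These are the join-irreducible elements of the paper: the two notions coincide in a
distributive lattice.\<close>

definition join_prime :: "'l::bounded_lattice \<Rightarrow> bool" where
  "join_prime j \<longleftrightarrow> j \<noteq> bot \<and> (\<forall>x y. j \<le> sup x y \<longrightarrow> j \<le> x \<or> j \<le> y)"

lemma join_prime_le_sup_iff: "join_prime j \<Longrightarrow> j \<le> sup x y \<longleftrightarrow> j \<le> x \<or> j \<le> y"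
  by (auto simp: join_prime_def le_supI1 le_supI2)

lemma join_prime_le_Sup_iff:
  fixes j :: "'l::complete_lattice"
  assumes "join_prime j" and "finite X"
  shows "j \<le> Sup X \<longleftrightarrow> (\<exists>x\<in>X. j \<le> x)"
  using \<open>finite X\<close>
proof (induction X rule: finite_induct)
  case empty
  then show ?case using assms(1) by (simp add: join_prime_def bot_unique)
next
  case (insert x X)
  then show ?case using assms(1) by (simp add: join_prime_le_sup_iff)
qed

lemma join_prime_le_SUP_iff:
  fixes f :: "'b \<Rightarrow> 'l::finite_lattice_complete"
  assumes "join_prime j"
  shows "j \<le> (SUP x\<in>X. f x) \<longleftrightarrow> (\<exists>x\<in>X. j \<le> f x)"
  using join_prime_le_Sup_iff[OF assms, of "f ` X"] by simp

lemma Sup_join_primes_below: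
  fixes x :: "'l::finite_distrib_lattice_complete"
  shows "Sup {j. join_prime j \<and> j \<le> x} = x" (is "?y = x")
proof (rule antisym)
  show "?y \<le> x" by (rule Sup_least) simp
  show "x \<le> ?y"
  proof (rule ccontr)
    assume "\<not> x \<le> ?y"
    then obtain m where m: "m \<le> x" "\<not> m \<le> ?y"
      and minimal: "\<And>z. z \<le> m \<Longrightarrow> z \<le> x \<Longrightarrow> \<not> z \<le> ?y \<Longrightarrow> z = m"
      using finite_has_minimal2[of "{z. z \<le> x \<and> \<not> z \<le> ?y}" x] by auto
    have "m \<noteq> bot" using m(2) by auto
    moreover have "\<not> join_prime m" using m by (auto intro: Sup_upper)
    ultimately obtain a b where ab: "m \<le> sup a b" "\<not> m \<le> a" "\<not> m \<le> b"
      by (auto simp: join_prime_def)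
    \<comment> \<open>the minimal counterexample m splits into the strictly smaller parts \<open>inf m a\<close> and \<open>inf m b\<close>\<close>
    have "inf m c \<le> ?y" if "\<not> m \<le> c" for c
      using minimal[of "inf m c"] m(1) that by (metis inf_le1 inf_le2 order_trans)
    then have "sup (inf m a) (inf m b) \<le> ?y" using ab by simp
    moreover have "sup (inf m a) (inf m b) = m"
      using ab(1) by (metis inf.absorb1 inf_sup_distrib1)
    ultimately show False using m(2) by simp
  qed
qed

lemma join_prime_ext:
  fixes x y :: "'l::finite_distrib_lattice_complete"
  assumes "\<And>j. join_prime j \<Longrightarrow> j \<le> x \<longleftrightarrow> j \<le> y"
  shows "x = y"
proof -
  have "{j. join_prime j \<and> j \<le> x} = {j. join_prime j \<and> j \<le> y}" using assms by blast
  then show ?thesis by (metis Sup_join_primes_below)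
qed

section \<open>Threshold objectives\<close>

definition can_enforce :: "('a, 's, 'act, 'p, 'l) mvcgs \<Rightarrow> bool \<Rightarrow> 'a set
    \<Rightarrow> ((nat \<Rightarrow> 's) \<Rightarrow> bool) \<Rightarrow> 's \<Rightarrow> bool" where
  "can_enforce M pr A \<Phi> q \<longleftrightarrow> (\<exists>s\<in>strats M pr A. \<forall>\<rho>\<in>outcomes M A q s. \<Phi> \<rho>)"

lemma can_enforce_pr_iff:
  "can_enforce M True A \<Phi> q \<longleftrightarrow> (\<exists>s\<in>pr_strats M A. \<forall>\<rho>\<in>outcomes M A q s. \<Phi> \<rho>)"
  by (simp add: can_enforce_def strats_def)

lemma can_enforce_ml_iff:
  "can_enforce M False A \<Phi> q \<longleftrightarrow> (\<exists>s\<in>ml_strats M A. \<forall>\<rho>\<in>outcomes M A q s. \<Phi> \<rho>)"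
  by (simp add: can_enforce_def strats_def)

lemma join_prime_le_coop_iff:
  fixes M :: "('a, 's, 'act, 'p, 'l::finite_lattice_complete) mvcgs"
  assumes "join_prime j"
  shows "j \<le> coop M pr A \<gamma> q \<longleftrightarrow> can_enforce M pr A (\<lambda>\<rho>. j \<le> \<gamma> \<rho>) q"
  using assms by (simp add: coop_def can_enforce_def join_prime_le_SUP_iff le_INF_iff)

lemma join_prime_le_dual_iff:
  fixes M :: "('a, 's, 'act, 'p, 'l::finite_lattice_complete) mvcgs"
  assumes "join_prime j"
  shows "j \<le> dual M pr A \<gamma> q \<longleftrightarrow> \<not> can_enforce M pr A (\<lambda>\<rho>. \<not> j \<le> \<gamma> \<rho>) q"
  using assms by (simp add: dual_def can_enforce_def join_prime_le_SUP_iff le_INF_iff)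

lemma le_path_next_iff: "j \<le> path_next f \<rho> \<longleftrightarrow> path_next (\<lambda>q. j \<le> f q) \<rho>"
  by (simp add: path_next_def)

lemma join_prime_le_path_until_iff:
  fixes f1 f2 :: "'s \<Rightarrow> 'l::finite_lattice_complete"
  assumes "join_prime j"
  shows "j \<le> path_until f1 f2 \<rho> \<longleftrightarrow> path_until (\<lambda>q. j \<le> f1 q) (\<lambda>q. j \<le> f2 q) \<rho>"
  using assms by (simp add: path_until_def join_prime_le_SUP_iff le_INF_iff)

lemma join_prime_le_path_weak_iff:
  fixes f1 f2 :: "'s \<Rightarrow> 'l::finite_lattice_complete"
  assumes "join_prime j"
  shows "j \<le> path_weak f1 f2 \<rho> \<longleftrightarrow> path_weak (\<lambda>q. j \<le> f1 q) (\<lambda>q. j \<le> f2 q) \<rho>"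
  using assms
  by (simp add: path_weak_def join_prime_le_sup_iff join_prime_le_path_until_iff le_INF_iff)

lemma path_until_bool_iff: "path_until P Q \<rho> \<longleftrightarrow> (\<exists>i. Q (\<rho> i) \<and> (\<forall>k<i. P (\<rho> k)))"
  by (auto simp: path_until_def)

lemma path_weak_bool_iff: "path_weak P Q \<rho> \<longleftrightarrow> path_until P Q \<rho> \<or> (\<forall>i. P (\<rho> i))"
  by (simp add: path_weak_def)

lemma ex_nat_0_or_Suc: "(\<exists>i. P i) \<longleftrightarrow> P 0 \<or> (\<exists>i. P (Suc i))"
  by (metis not0_implies_Suc)

lemma all_nat_0_and_Suc: "(\<forall>i. P i) \<longleftrightarrow> P 0 \<and> (\<forall>i. P (Suc i))"
  by (metis not0_implies_Suc)

lemma path_until_case_nat: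
  "path_until P Q (case_nat q \<rho>) \<longleftrightarrow> Q q \<or> (P q \<and> path_until P Q \<rho>)"
  unfolding path_until_bool_iff by (subst ex_nat_0_or_Suc) (auto simp: All_less_Suc2)

lemma path_weak_case_nat:
  "path_weak P Q (case_nat q \<rho>) \<longleftrightarrow> Q q \<or> (P q \<and> path_weak P Q \<rho>)"
  unfolding path_weak_bool_iff path_until_case_nat by (subst all_nat_0_and_Suc) auto

lemma not_path_next_iff: "\<not> path_next P \<rho> \<longleftrightarrow> path_next (\<lambda>q. \<not> P q) \<rho>"
  by (simp add: path_next_def)

lemma not_path_until_iff:
  "\<not> path_until P Q \<rho> \<longleftrightarrow> path_weak (\<lambda>q. \<not> Q q) (\<lambda>q. \<not> P q \<and> \<not> Q q) \<rho>"
  unfolding path_weak_bool_iff path_until_bool_iff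
proof
  assume none: "\<not> (\<exists>i. Q (\<rho> i) \<and> (\<forall>k<i. P (\<rho> k)))"
  show "(\<exists>i. (\<not> P (\<rho> i) \<and> \<not> Q (\<rho> i)) \<and> (\<forall>k<i. \<not> Q (\<rho> k))) \<or> (\<forall>i. \<not> Q (\<rho> i))"
  proof (cases "\<exists>i. Q (\<rho> i)")
    case True
    then obtain i where "Q (\<rho> i)" "\<forall>k<i. \<not> Q (\<rho> k)"
      using exists_least_iff[of "\<lambda>i. Q (\<rho> i)"] by blast
    with none show ?thesis by (meson order.strict_trans)
  qed simp
qed (metis linorder_neqE_nat)

lemma not_path_weak_iff:
  "\<not> path_weak P Q \<rho> \<longleftrightarrow> path_until (\<lambda>q. \<not> Q q) (\<lambda>q. \<not> P q \<and> \<not> Q q) \<rho>"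
  unfolding path_weak_bool_iff path_until_bool_iff
proof
  assume none: "\<not> ((\<exists>i. Q (\<rho> i) \<and> (\<forall>k<i. P (\<rho> k))) \<or> (\<forall>i. P (\<rho> i)))"
  then obtain i where "\<not> P (\<rho> i)" "\<forall>k<i. P (\<rho> k)"
    using exists_least_iff[of "\<lambda>i. \<not> P (\<rho> i)"] by blast
  with none show "\<exists>i. (\<not> P (\<rho> i) \<and> \<not> Q (\<rho> i)) \<and> (\<forall>k<i. \<not> Q (\<rho> k))"
    by (meson order.strict_trans1 nless_le)
qed (metis linorder_neqE_nat)

lemma path_weak_boolI:
  assumes "\<And>i. \<forall>k\<le>i. \<not> Q (\<rho> k) \<Longrightarrow> P (\<rho> i)"
  shows "path_weak P Q \<rho>"
proof (cases "\<exists>i. Q (\<rho> i)")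
  case True
  then obtain i where "Q (\<rho> i)" "\<forall>k<i. \<not> Q (\<rho> k)"
    using exists_least_iff[of "\<lambda>i. Q (\<rho> i)"] by blast
  then show ?thesis using assms by (auto simp: path_weak_bool_iff path_until_bool_iff)
qed (use assms in \<open>auto simp: path_weak_bool_iff\<close>)

section \<open>Outcomes of strategies\<close>

definition profiles :: "('a, 's, 'act, 'p, 'l) mvcgs \<Rightarrow> 'a set \<Rightarrow> 's \<Rightarrow> ('a \<Rightarrow> 'act)
    \<Rightarrow> ('a \<Rightarrow> 'act) set" where
  "profiles M A q \<sigma> = {\<alpha>. (\<forall>a. \<alpha> a \<in> avail M a q) \<and> (\<forall>a\<in>A. \<alpha> a = \<sigma> a)}"

definition forces_into :: "('a, 's, 'act, 'p, 'l) mvcgs \<Rightarrow> 'a set \<Rightarrow> 's \<Rightarrow> ('a \<Rightarrow> 'act)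
    \<Rightarrow> 's set \<Rightarrow> bool" where
  "forces_into M A q \<sigma> X \<longleftrightarrow> (\<forall>a\<in>A. \<sigma> a \<in> avail M a q) \<and> trans M q ` profiles M A q \<sigma> \<subseteq> X"

definition shift_strategy :: "('a \<Rightarrow> 's list \<Rightarrow> 'act) \<Rightarrow> 's \<Rightarrow> 'a \<Rightarrow> 's list \<Rightarrow> 'act" where
  "shift_strategy s q = (\<lambda>a h. s a (q # h))"

lemma outcomes_iff:
  "\<rho> \<in> outcomes M A q s \<longleftrightarrow> \<rho> 0 = q \<and>
     (\<forall>i. \<rho> (Suc i) \<in> trans M (\<rho> i) ` profiles M A (\<rho> i) (\<lambda>a. s a (map \<rho> [0..<Suc i])))"
  by (auto simp: outcomes_def profiles_def image_iff)

lemma memoryless_outcomes_iff: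
  "\<rho> \<in> outcomes M A q (\<lambda>a h. f a (last h)) \<longleftrightarrow> \<rho> 0 = q \<and>
     (\<forall>i. \<rho> (Suc i) \<in> trans M (\<rho> i) ` profiles M A (\<rho> i) (\<lambda>a. f a (\<rho> i)))"
  by (simp add: outcomes_iff)

lemma ml_strats_subset_pr_strats: "ml_strats M A \<subseteq> pr_strats M A"
  by (auto simp: ml_strats_def pr_strats_def)

lemma pr_strats_first_move:
  assumes "s \<in> pr_strats M A" and "a \<in> A"
  shows "s a [q] \<in> avail M a q"
proof -
  have "s a [q] \<in> avail M a (last [q])" using assms unfolding pr_strats_def by blast
  then show ?thesis by simp
qed

lemma shift_strategy_pr_strats:
  assumes "s \<in> pr_strats M A"
  shows "shift_strategy s q \<in> pr_strats M A"
proof -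
  have "s a (q # h) \<in> avail M a (last h)" if "a \<in> A" and "h \<noteq> []" for a h
  proof -
    have "s a (q # h) \<in> avail M a (last (q # h))" using assms that(1) unfolding pr_strats_def by blast
    then show ?thesis using that(2) by simp
  qed
  then show ?thesis by (simp add: pr_strats_def shift_strategy_def)
qed

lemma profiles_nonempty:
  assumes "wf_mvcgs M" and "\<forall>a\<in>A. \<sigma> a \<in> avail M a q"
  shows "\<exists>\<alpha>. \<alpha> \<in> profiles M A q \<sigma>"
proof
  have "avail M a q \<noteq> {}" for a using assms(1) by (simp add: wf_mvcgs_def)
  then show "(\<lambda>a. if a \<in> A then \<sigma> a else SOME x. x \<in> avail M a q) \<in> profiles M A q \<sigma>"
    using assms(2) by (simp add: profiles_def some_in_eq)
qed

lemma case_nat_outcomes: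
  assumes "\<rho> \<in> outcomes M A (trans M q \<alpha>) (shift_strategy s q)"
    and "\<alpha> \<in> profiles M A q (\<lambda>a. s a [q])"
  shows "case_nat q \<rho> \<in> outcomes M A q s"
  unfolding outcomes_iff
proof (intro conjI allI)
  fix i
  have history: "map (case_nat q \<rho>) [0..<Suc i] = q # map \<rho> [0..<i]"
    by (simp only: map_upt_Suc) simp
  show "case_nat q \<rho> (Suc i) \<in> trans M (case_nat q \<rho> i) `
      profiles M A (case_nat q \<rho> i) (\<lambda>a. s a (map (case_nat q \<rho>) [0..<Suc i]))"
  proof (cases i)
    case 0
    then show ?thesis using assms by (simp add: outcomes_iff)
  next
    case (Suc k)
    have "\<rho> (Suc k) \<in> trans M (\<rho> k) `
        profiles M A (\<rho> k) (\<lambda>a. shift_strategy s q a (map \<rho> [0..<Suc k]))"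
      using assms(1) unfolding outcomes_iff by blast
    then show ?thesis unfolding history unfolding Suc shift_strategy_def by simp
  qed
qed simp

lemma shift_strategy_wins:
  assumes "\<forall>\<rho>\<in>outcomes M A q s. \<Phi> \<rho>" and "\<alpha> \<in> profiles M A q (\<lambda>a. s a [q])"
  shows "\<forall>\<rho>\<in>outcomes M A (trans M q \<alpha>) (shift_strategy s q). \<Phi> (case_nat q \<rho>)"
proof
  fix \<rho> assume "\<rho> \<in> outcomes M A (trans M q \<alpha>) (shift_strategy s q)"
  then have "case_nat q \<rho> \<in> outcomes M A q s" using assms(2) by (rule case_nat_outcomes)
  then show "\<Phi> (case_nat q \<rho>)" using assms(1) by blast
qed

lemma dependent_nat_choice_from:
  assumes "R x" and step: "\<And>y. R y \<Longrightarrow> \<exists>z. R z \<and> S y z"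
  obtains f where "f 0 = x" and "\<And>n. R (f n)" and "\<And>n. S (f n) (f (Suc n))"
proof -
  have "\<exists>f. \<forall>n. (R (f n) \<and> (n = 0 \<longrightarrow> f n = x)) \<and> S (f n) (f (Suc n))"
  proof (rule dependent_nat_choice)
    show "\<exists>y. R y \<and> (0 = 0 \<longrightarrow> y = x)" using assms(1) by blast
  next
    fix y and n :: nat
    assume "R y \<and> (n = 0 \<longrightarrow> y = x)"
    then obtain z where "R z" and "S y z" using step by blast
    then show "\<exists>z. (R z \<and> (Suc n = 0 \<longrightarrow> z = x)) \<and> S y z" by blast
  qed
  then show thesis using that by blast
qed

lemma outcome_exists_invariant:
  fixes M :: "('a, 's, 'act, 'p, 'l) mvcgs"
  assumes "R q s"
    and step: "\<And>q' s'. R q' s' \<Longrightarrow>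
      \<exists>\<alpha>\<in>profiles M A q' (\<lambda>a. s' a [q']). R (trans M q' \<alpha>) (shift_strategy s' q')"
  obtains \<rho> where "\<rho> \<in> outcomes M A q s" and "\<And>i. \<exists>s'. R (\<rho> i) s'"
proof -
  let ?succ = "\<lambda>y z. \<exists>\<alpha>\<in>profiles M A (fst y) (\<lambda>a. snd y a [fst y]).
    z = (trans M (fst y) \<alpha>, shift_strategy (snd y) (fst y))"
  obtain x where x0: "x 0 = (q, s)" and x: "\<And>n. R (fst (x n)) (snd (x n))"
    and x_Suc: "\<And>n. ?succ (x n) (x (Suc n))"
  proof (rule dependent_nat_choice_from
      [where R = "\<lambda>y. R (fst y) (snd y)" and S = ?succ and x = "(q, s)"])
    show "R (fst (q, s)) (snd (q, s))" using assms(1) by simp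
    show "\<exists>z. R (fst z) (snd z) \<and> ?succ y z" if "R (fst y) (snd y)" for y
      using step[OF that] by auto
  qed (rule that)
  define \<rho> where "\<rho> i = fst (x i)" for i
  have strategy: "snd (x n) = (\<lambda>a h. s a (map \<rho> [0..<n] @ h))" for n
  proof (induction n)
    case 0
    then show ?case using x0 by simp
  next
    case (Suc n)
    obtain \<alpha> where "x (Suc n) = (trans M (fst (x n)) \<alpha>, shift_strategy (snd (x n)) (fst (x n)))"
      using x_Suc[of n] by blast
    then show ?case using Suc by (simp add: shift_strategy_def \<rho>_def)
  qed
  have "\<rho> \<in> outcomes M A q s"
    unfolding outcomes_iff
  proof (intro conjI allI)
    show "\<rho> 0 = q" using x0 by (simp add: \<rho>_def)
    fix i
    show "\<rho> (Suc i) \<in> trans M (\<rho> i) ` profiles M A (\<rho> i) (\<lambda>a. s a (map \<rho> [0..<Suc i]))"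
      using x_Suc[of i] unfolding strategy by (force simp: \<rho>_def)
  qed
  moreover have "\<exists>s'. R (\<rho> i) s'" for i using x[of i] by (auto simp: \<rho>_def)
  ultimately show thesis using that by blast
qed

lemma outcomes_nonempty:
  assumes "wf_mvcgs M" and "s \<in> pr_strats M A"
  shows "\<exists>\<rho>. \<rho> \<in> outcomes M A q s"
proof -
  have step: "\<exists>\<alpha>\<in>profiles M A q (\<lambda>a. s a [q]). shift_strategy s q \<in> pr_strats M A"
    if s: "s \<in> pr_strats M A" for q s
  proof -
    have "\<forall>a\<in>A. s a [q] \<in> avail M a q" using s by (simp add: pr_strats_first_move)
    from profiles_nonempty[OF assms(1) this]
    obtain \<alpha> where "\<alpha> \<in> profiles M A q (\<lambda>a. s a [q])" ..
    with shift_strategy_pr_strats[OF s] show ?thesis by blast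
  qed
  show ?thesis
    using outcome_exists_invariant[where R = "\<lambda>q s. s \<in> pr_strats M A" and q = q, OF assms(2) step]
    by blast
qed

lemma winning_strategy_unfold:
  assumes wf: "wf_mvcgs M" and s: "s \<in> pr_strats M A"
    and wins: "\<forall>\<rho>\<in>outcomes M A q s. \<Phi> \<rho>"
    and unfold: "\<And>\<rho>. \<Phi> (case_nat q \<rho>) \<longleftrightarrow> B \<or> (C \<and> \<Phi> \<rho>)" and "\<not> B"
  shows "C"
    and "\<And>\<alpha>. \<alpha> \<in> profiles M A q (\<lambda>a. s a [q]) \<Longrightarrow>
      \<forall>\<rho>\<in>outcomes M A (trans M q \<alpha>) (shift_strategy s q). \<Phi> \<rho>"
proof -
  have "\<forall>a\<in>A. s a [q] \<in> avail M a q" using s by (simp add: pr_strats_first_move)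
  from profiles_nonempty[OF wf this] obtain \<alpha> where \<alpha>: "\<alpha> \<in> profiles M A q (\<lambda>a. s a [q])" ..
  from outcomes_nonempty[OF wf shift_strategy_pr_strats[OF s]]
  obtain \<rho> where "\<rho> \<in> outcomes M A (trans M q \<alpha>) (shift_strategy s q)" ..
  with shift_strategy_wins[OF wins \<alpha>] have "\<Phi> (case_nat q \<rho>)" by blast
  then show "C" using unfold \<open>\<not> B\<close> by blast
next
  fix \<alpha> assume "\<alpha> \<in> profiles M A q (\<lambda>a. s a [q])"
  from shift_strategy_wins[OF wins this]
  show "\<forall>\<rho>\<in>outcomes M A (trans M q \<alpha>) (shift_strategy s q). \<Phi> \<rho>"
    using \<open>\<not> B\<close> unfolding unfold by blast
qed

text \<open>Where no move forces the successor into \<open>X q\<close>, \<open>forcing_move\<close> only picks some available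
action, so that it always yields a legal memoryless strategy.\<close>

definition forcing_move :: "('a, 's, 'act, 'p, 'l) mvcgs \<Rightarrow> 'a set \<Rightarrow> ('s \<Rightarrow> 's set)
    \<Rightarrow> 'a \<Rightarrow> 's \<Rightarrow> 'act" where
  "forcing_move M A X a q =
     (if \<exists>\<sigma>. forces_into M A q \<sigma> (X q) then (SOME \<sigma>. forces_into M A q \<sigma> (X q)) a
      else (SOME x. x \<in> avail M a q))"

lemma forcing_move_forces:
  assumes "forces_into M A q \<sigma> (X q)"
  shows "forces_into M A q (\<lambda>a. forcing_move M A X a q) (X q)"
proof -
  have "\<exists>\<sigma>. forces_into M A q \<sigma> (X q)" using assms by blast
  then have "(\<lambda>a. forcing_move M A X a q) = (SOME \<sigma>. forces_into M A q \<sigma> (X q))"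
    unfolding forcing_move_def by simp
  moreover have "forces_into M A q (SOME \<sigma>. forces_into M A q \<sigma> (X q)) (X q)"
    using assms by (rule someI[where P = "\<lambda>\<sigma>. forces_into M A q \<sigma> (X q)"])
  ultimately show ?thesis by simp
qed

lemma forcing_strategy_ml_strats:
  assumes "wf_mvcgs M"
  shows "(\<lambda>a h. forcing_move M A X a (last h)) \<in> ml_strats M A"
proof -
  have "forcing_move M A X a q \<in> avail M a q" if "a \<in> A" for a q
  proof (cases "\<exists>\<sigma>. forces_into M A q \<sigma> (X q)")
    case True
    then obtain \<sigma> where "forces_into M A q \<sigma> (X q)" ..
    from forcing_move_forces[where X = X, OF this] show ?thesis
      using that by (simp add: forces_into_def)
  next
    case False
    have "avail M a q \<noteq> {}" using assms by (simp add: wf_mvcgs_def)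
    then show ?thesis using False by (simp add: forcing_move_def some_in_eq)
  qed
  then show ?thesis
    unfolding ml_strats_def mem_Collect_eq by (intro exI[of _ "forcing_move M A X"] conjI) auto
qed

lemma forcing_strategy_step:
  assumes "\<rho> \<in> outcomes M A q (\<lambda>a h. forcing_move M A X a (last h))"
    and "forces_into M A (\<rho> i) \<sigma> (X (\<rho> i))"
  shows "\<rho> (Suc i) \<in> X (\<rho> i)"
proof -
  have "forces_into M A (\<rho> i) (\<lambda>a. forcing_move M A X a (\<rho> i)) (X (\<rho> i))"
    using forcing_move_forces[where X = X, OF assms(2)] .
  moreover have "\<rho> (Suc i) \<in> trans M (\<rho> i) ` profiles M A (\<rho> i) (\<lambda>a. forcing_move M A X a (\<rho> i))"
    using assms(1) by (simp add: memoryless_outcomes_iff)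
  ultimately show ?thesis unfolding forces_into_def by blast
qed

section \<open>Memoryless strategies suffice for next, until and weak until\<close>

definition memoryless_suffices :: "('a, 's, 'act, 'p, 'l) mvcgs \<Rightarrow> 'a set
    \<Rightarrow> ((nat \<Rightarrow> 's) \<Rightarrow> bool) \<Rightarrow> bool" where
  "memoryless_suffices M A \<Phi> \<longleftrightarrow> (\<forall>q. can_enforce M True A \<Phi> q \<longrightarrow> can_enforce M False A \<Phi> q)"

lemma can_enforce_memorylessD: "can_enforce M False A \<Phi> q \<Longrightarrow> can_enforce M True A \<Phi> q"
  using ml_strats_subset_pr_strats unfolding can_enforce_pr_iff can_enforce_ml_iff by blast

lemma memoryless_suffices_path_next:
  assumes wf: "wf_mvcgs M"
  shows "memoryless_suffices M A (path_next P)"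
  unfolding memoryless_suffices_def
proof (intro allI impI)
  fix q assume "can_enforce M True A (path_next P) q"
  then obtain s where s: "s \<in> pr_strats M A" and wins: "\<forall>\<rho>\<in>outcomes M A q s. path_next P \<rho>"
    by (auto simp: can_enforce_pr_iff)
  have "P (trans M q \<alpha>)" if \<alpha>: "\<alpha> \<in> profiles M A q (\<lambda>a. s a [q])" for \<alpha>
  proof -
    from outcomes_nonempty[OF wf shift_strategy_pr_strats[OF s]]
    obtain \<rho> where \<rho>: "\<rho> \<in> outcomes M A (trans M q \<alpha>) (shift_strategy s q)" ..
    then have "path_next P (case_nat q \<rho>)" using shift_strategy_wins[OF wins \<alpha>] by blast
    moreover have "\<rho> 0 = trans M q \<alpha>" using \<rho> by (simp add: outcomes_iff)
    ultimately show ?thesis by (simp add: path_next_def)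
  qed
  moreover have "\<forall>a\<in>A. s a [q] \<in> avail M a q" using s by (simp add: pr_strats_first_move)
  ultimately have forces: "forces_into M A q (\<lambda>a. s a [q]) {q'. P q'}"
    by (auto simp: forces_into_def)
  have "path_next P \<rho>"
    if \<rho>: "\<rho> \<in> outcomes M A q (\<lambda>a h. forcing_move M A (\<lambda>_. {q'. P q'}) a (last h))" for \<rho>
  proof -
    have "\<rho> 0 = q" using \<rho> by (simp add: outcomes_iff)
    with forces have "forces_into M A (\<rho> 0) (\<lambda>a. s a [q]) {q'. P q'}" by simp
    from forcing_strategy_step[OF \<rho> this] show ?thesis by (simp add: path_next_def)
  qed
  then show "can_enforce M False A (path_next P) q"
    using forcing_strategy_ml_strats[OF wf] unfolding can_enforce_ml_iff by blast
qed

lemma can_enforce_path_weak_step: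
  assumes wf: "wf_mvcgs M" and "can_enforce M True A (path_weak P Q) q" and "\<not> Q q"
  shows "P q \<and> (\<exists>\<sigma>. forces_into M A q \<sigma> {q'. can_enforce M True A (path_weak P Q) q'})"
proof -
  obtain s where s: "s \<in> pr_strats M A" and wins: "\<forall>\<rho>\<in>outcomes M A q s. path_weak P Q \<rho>"
    using assms(2) by (auto simp: can_enforce_pr_iff)
  note unfold = winning_strategy_unfold[where \<Phi> = "path_weak P Q" and B = "Q q" and C = "P q",
    OF wf s wins path_weak_case_nat \<open>\<not> Q q\<close>]
  have "can_enforce M True A (path_weak P Q) (trans M q \<alpha>)"
    if "\<alpha> \<in> profiles M A q (\<lambda>a. s a [q])" for \<alpha>
    using unfold(2)[OF that] shift_strategy_pr_strats[OF s] unfolding can_enforce_pr_iff by blast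
  moreover have "\<forall>a\<in>A. s a [q] \<in> avail M a q" using s by (simp add: pr_strats_first_move)
  ultimately have "forces_into M A q (\<lambda>a. s a [q]) {q'. can_enforce M True A (path_weak P Q) q'}"
    by (auto simp: forces_into_def)
  with unfold(1) show ?thesis by blast
qed

lemma memoryless_suffices_path_weak:
  assumes wf: "wf_mvcgs M"
  shows "memoryless_suffices M A (path_weak P Q)"
  unfolding memoryless_suffices_def
proof (intro allI impI)
  fix q0 assume q0: "can_enforce M True A (path_weak P Q) q0"
  define Z where "Z = {q. can_enforce M True A (path_weak P Q) q}"
  have Z_step: "P q \<and> (\<exists>\<sigma>. forces_into M A q \<sigma> Z)" if "q \<in> Z" and "\<not> Q q" for q
    using can_enforce_path_weak_step[where P = P and Q = Q, OF wf _ \<open>\<not> Q q\<close>] \<open>q \<in> Z\<close>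
    unfolding Z_def by simp
  define s where "s = (\<lambda>a h. forcing_move M A (\<lambda>_. Z) a (last h))"
  have "path_weak P Q \<rho>" if \<rho>: "\<rho> \<in> outcomes M A q0 s" for \<rho>
  proof -
    have in_Z: "\<rho> i \<in> Z" if "\<forall>k<i. \<not> Q (\<rho> k)" for i
      using that
    proof (induction i)
      case 0
      then show ?case using \<rho> q0 by (simp add: outcomes_iff Z_def)
    next
      case (Suc i)
      then have "\<rho> i \<in> Z" and "\<not> Q (\<rho> i)" by auto
      from Z_step[OF this] obtain \<sigma> where "forces_into M A (\<rho> i) \<sigma> Z" by blast
      from forcing_strategy_step[where X = "\<lambda>_. Z", OF \<rho>[unfolded s_def] this] show ?case .
    qed
    show ?thesis
    proof (rule path_weak_boolI)
      fix i assume "\<forall>k\<le>i. \<not> Q (\<rho> k)"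
      then have "\<rho> i \<in> Z" and "\<not> Q (\<rho> i)" using in_Z by auto
      from Z_step[OF this] show "P (\<rho> i)" ..
    qed
  qed
  then show "can_enforce M False A (path_weak P Q) q0"
    using forcing_strategy_ml_strats[OF wf] unfolding can_enforce_ml_iff s_def by blast
qed

primrec attractor :: "('a, 's, 'act, 'p, 'l) mvcgs \<Rightarrow> 'a set \<Rightarrow> ('s \<Rightarrow> bool) \<Rightarrow> ('s \<Rightarrow> bool)
    \<Rightarrow> nat \<Rightarrow> 's set" where
  "attractor M A P Q 0 = {q. Q q}"
| "attractor M A P Q (Suc n) =
     attractor M A P Q n \<union> {q. P q \<and> (\<exists>\<sigma>. forces_into M A q \<sigma> (attractor M A P Q n))}"

definition attractor_rank :: "('a, 's, 'act, 'p, 'l) mvcgs \<Rightarrow> 'a set \<Rightarrow> ('s \<Rightarrow> bool)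
    \<Rightarrow> ('s \<Rightarrow> bool) \<Rightarrow> 's \<Rightarrow> nat" where
  "attractor_rank M A P Q q = (LEAST n. q \<in> attractor M A P Q n)"

lemma attractor_mono: "m \<le> n \<Longrightarrow> attractor M A P Q m \<subseteq> attractor M A P Q n"
  by (rule lift_Suc_mono_le[where f = "attractor M A P Q"]) auto

lemma attractor_closed:
  fixes M :: "('a, 's::finite, 'act, 'p, 'l) mvcgs"
  assumes "P q" and "forces_into M A q \<sigma> (\<Union>n. attractor M A P Q n)"
  shows "\<exists>n. q \<in> attractor M A P Q n"
proof -
  let ?S = "trans M q ` profiles M A q \<sigma>"
  have "\<forall>q'\<in>?S. \<exists>n. q' \<in> attractor M A P Q n" using assms(2) unfolding forces_into_def by blast
  from bchoice[OF this] obtain stage where stage: "\<forall>q'\<in>?S. q' \<in> attractor M A P Q (stage q')"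
    by blast
  define N where "N = Max (stage ` ?S)"
  have "?S \<subseteq> attractor M A P Q N"
  proof
    fix q' assume "q' \<in> ?S"
    then have "stage q' \<le> N" unfolding N_def by (intro Max_ge) simp_all
    from attractor_mono[where M = M and A = A and P = P and Q = Q, OF this]
    show "q' \<in> attractor M A P Q N" using stage \<open>q' \<in> ?S\<close> by blast
  qed
  with assms(2) have "forces_into M A q \<sigma> (attractor M A P Q N)" by (simp add: forces_into_def)
  with assms(1) have "q \<in> attractor M A P Q (Suc N)" by auto
  then show ?thesis by blast
qed

lemma winning_until_outside_attractor_step:
  fixes M :: "('a, 's::finite, 'act, 'p, 'l) mvcgs"
  assumes wf: "wf_mvcgs M" and s: "s \<in> pr_strats M A"
    and wins: "\<forall>\<rho>\<in>outcomes M A q s. path_until P Q \<rho>"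
    and outside: "q \<notin> (\<Union>n. attractor M A P Q n)"
  shows "\<exists>\<alpha>\<in>profiles M A q (\<lambda>a. s a [q]). trans M q \<alpha> \<notin> (\<Union>n. attractor M A P Q n) \<and>
    (\<forall>\<rho>\<in>outcomes M A (trans M q \<alpha>) (shift_strategy s q). path_until P Q \<rho>)"
proof -
  have "q \<notin> attractor M A P Q 0" using outside by blast
  then have "\<not> Q q" by simp
  note unfold = winning_strategy_unfold[where \<Phi> = "path_until P Q" and B = "Q q" and C = "P q",
    OF wf s wins path_until_case_nat this]
  have "\<not> forces_into M A q (\<lambda>a. s a [q]) (\<Union>n. attractor M A P Q n)"
    using attractor_closed[where P = P and q = q, OF unfold(1)] outside by blast
  moreover have "\<forall>a\<in>A. s a [q] \<in> avail M a q" using s by (simp add: pr_strats_first_move)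
  ultimately have "\<not> trans M q ` profiles M A q (\<lambda>a. s a [q]) \<subseteq> (\<Union>n. attractor M A P Q n)"
    by (simp add: forces_into_def)
  then obtain \<alpha> where \<alpha>: "\<alpha> \<in> profiles M A q (\<lambda>a. s a [q])"
    and "trans M q \<alpha> \<notin> (\<Union>n. attractor M A P Q n)"
    by blast
  with unfold(2)[OF \<alpha>] show ?thesis by blast
qed

text \<open>Outside the attractor the opponents can answer every perfect-recall strategy so that the
play never enters it, and Q never holds there.\<close>

lemma can_enforce_until_in_attractor:
  fixes M :: "('a, 's::finite, 'act, 'p, 'l) mvcgs"
  assumes wf: "wf_mvcgs M" and "can_enforce M True A (path_until P Q) q"
  shows "\<exists>n. q \<in> attractor M A P Q n"
proof (rule ccontr)
  let ?Attr = "\<Union>n. attractor M A P Q n"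
  assume "\<nexists>n. q \<in> attractor M A P Q n"
  then have "q \<notin> ?Attr" by blast
  define R where "R q' s \<longleftrightarrow>
    s \<in> pr_strats M A \<and> (\<forall>\<rho>\<in>outcomes M A q' s. path_until P Q \<rho>) \<and> q' \<notin> ?Attr" for q' s
  have step: "\<exists>\<alpha>\<in>profiles M A q' (\<lambda>a. s a [q']). R (trans M q' \<alpha>) (shift_strategy s q')"
    if "R q' s" for q' s
  proof -
    from that have s: "s \<in> pr_strats M A" and wins: "\<forall>\<rho>\<in>outcomes M A q' s. path_until P Q \<rho>"
      and outside: "q' \<notin> ?Attr"
      by (simp_all add: R_def)
    from winning_until_outside_attractor_step[OF wf s wins outside]
    show ?thesis using shift_strategy_pr_strats[OF s] by (auto simp: R_def)
  qed
  obtain s where "s \<in> pr_strats M A" and "\<forall>\<rho>\<in>outcomes M A q s. path_until P Q \<rho>"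
    using assms(2) by (auto simp: can_enforce_pr_iff)
  with \<open>q \<notin> ?Attr\<close> have "R q s" by (simp add: R_def)
  from outcome_exists_invariant[where R = R, OF this step]
  obtain \<rho> where \<rho>: "\<rho> \<in> outcomes M A q s" and R_\<rho>: "\<And>i. \<exists>s'. R (\<rho> i) s'" by blast
  have "\<rho> i \<notin> attractor M A P Q 0" for i using R_\<rho>[of i] unfolding R_def by blast
  moreover have "path_until P Q \<rho>" using \<rho> \<open>R q s\<close> by (simp add: R_def)
  ultimately show False by (auto simp: path_until_bool_iff)
qed

lemma attractor_strategy_reaches:
  assumes \<rho>: "\<rho> \<in> outcomes M A q
      (\<lambda>a h. forcing_move M A (\<lambda>q. attractor M A P Q (attractor_rank M A P Q q - 1)) a (last h))"
    and "\<rho> i \<in> attractor M A P Q n"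
  shows "\<exists>k\<ge>i. Q (\<rho> k) \<and> (\<forall>l\<in>{i..<k}. P (\<rho> l))"
  using assms(2)
proof (induction n arbitrary: i)
  case 0
  then show ?case by auto
next
  case (Suc n)
  show ?case
  proof (cases "\<rho> i \<in> attractor M A P Q n")
    case True
    then show ?thesis by (rule Suc.IH)
  next
    case False
    with Suc.prems obtain \<sigma> where "P (\<rho> i)" and \<sigma>: "forces_into M A (\<rho> i) \<sigma> (attractor M A P Q n)"
      by auto
    have "attractor_rank M A P Q (\<rho> i) = Suc n"
      unfolding attractor_rank_def
    proof (rule Least_equality)
      fix m assume "\<rho> i \<in> attractor M A P Q m"
      then show "Suc n \<le> m" using False attractor_mono[of m n] by (meson not_less_eq_eq subsetD)
    qed (rule Suc.prems)
    with \<sigma> have "\<rho> (Suc i) \<in> attractor M A P Q n"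
      using forcing_strategy_step[OF \<rho>, of i] by simp
    then obtain k where "k \<ge> Suc i" and "Q (\<rho> k)" and "\<forall>l\<in>{Suc i..<k}. P (\<rho> l)"
      using Suc.IH by blast
    then show ?thesis using \<open>P (\<rho> i)\<close> by (intro exI[of _ k]) (auto simp: le_less Suc_le_eq)
  qed
qed

lemma memoryless_suffices_path_until:
  fixes M :: "('a, 's::finite, 'act, 'p, 'l) mvcgs"
  assumes wf: "wf_mvcgs M"
  shows "memoryless_suffices M A (path_until P Q)"
  unfolding memoryless_suffices_def
proof (intro allI impI)
  fix q assume "can_enforce M True A (path_until P Q) q"
  then obtain n where n: "q \<in> attractor M A P Q n"
    using can_enforce_until_in_attractor[OF wf] by blast
  define s where "s =
    (\<lambda>a h. forcing_move M A (\<lambda>q. attractor M A P Q (attractor_rank M A P Q q - 1)) a (last h))"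
  have "path_until P Q \<rho>" if \<rho>: "\<rho> \<in> outcomes M A q s" for \<rho>
  proof -
    have "\<rho> 0 \<in> attractor M A P Q n" using \<rho> n by (simp add: outcomes_iff)
    from attractor_strategy_reaches[OF \<rho>[unfolded s_def] this] show ?thesis
      by (auto simp: path_until_bool_iff)
  qed
  then show "can_enforce M False A (path_until P Q) q"
    using forcing_strategy_ml_strats[OF wf] unfolding can_enforce_ml_iff s_def by blast
qed

section \<open>Memory irrelevance for the multi-valued semantics\<close>

lemma coop_memoryless_eq:
  fixes \<gamma> :: "(nat \<Rightarrow> 's) \<Rightarrow> 'l::finite_distrib_lattice_complete"
  assumes "\<And>j. join_prime j \<Longrightarrow> memoryless_suffices M A (\<lambda>\<rho>. j \<le> \<gamma> \<rho>)"
  shows "coop M True A \<gamma> q = coop M False A \<gamma> q"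
proof (rule join_prime_ext)
  fix j :: 'l assume "join_prime j"
  then show "j \<le> coop M True A \<gamma> q \<longleftrightarrow> j \<le> coop M False A \<gamma> q"
    using assms can_enforce_memorylessD
    by (auto simp: join_prime_le_coop_iff memoryless_suffices_def)
qed

lemma dual_memoryless_eq:
  fixes \<gamma> :: "(nat \<Rightarrow> 's) \<Rightarrow> 'l::finite_distrib_lattice_complete"
  assumes "\<And>j. join_prime j \<Longrightarrow> memoryless_suffices M A (\<lambda>\<rho>. \<not> j \<le> \<gamma> \<rho>)"
  shows "dual M True A \<gamma> q = dual M False A \<gamma> q"
proof (rule join_prime_ext)
  fix j :: 'l assume "join_prime j"
  then show "j \<le> dual M True A \<gamma> q \<longleftrightarrow> j \<le> dual M False A \<gamma> q"
    using assms can_enforce_memorylessD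
    by (auto simp: join_prime_le_dual_iff memoryless_suffices_def)
qed

context
  fixes M :: "('a, 's::finite, 'act, 'p, 'l::finite_distrib_lattice_complete) mvcgs"
  assumes wf: "wf_mvcgs M"
begin

lemma coop_path_next_memoryless:
  "coop M True A (path_next f) q = coop M False A (path_next f) q"
  by (rule coop_memoryless_eq) (simp add: le_path_next_iff memoryless_suffices_path_next[OF wf])

lemma coop_path_until_memoryless:
  "coop M True A (path_until f1 f2) q = coop M False A (path_until f1 f2) q"
  by (rule coop_memoryless_eq)
    (simp add: join_prime_le_path_until_iff memoryless_suffices_path_until[OF wf])

lemma coop_path_weak_memoryless:
  "coop M True A (path_weak f1 f2) q = coop M False A (path_weak f1 f2) q"
  by (rule coop_memoryless_eq)
    (simp add: join_prime_le_path_weak_iff memoryless_suffices_path_weak[OF wf])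

lemma dual_path_next_memoryless:
  "dual M True A (path_next f) q = dual M False A (path_next f) q"
  by (rule dual_memoryless_eq)
    (simp add: le_path_next_iff not_path_next_iff memoryless_suffices_path_next[OF wf])

lemma dual_path_until_memoryless:
  "dual M True A (path_until f1 f2) q = dual M False A (path_until f1 f2) q"
  by (rule dual_memoryless_eq)
    (simp add: join_prime_le_path_until_iff not_path_until_iff memoryless_suffices_path_weak[OF wf])

lemma dual_path_weak_memoryless:
  "dual M True A (path_weak f1 f2) q = dual M False A (path_weak f1 f2) q"
  by (rule dual_memoryless_eq)
    (simp add: join_prime_le_path_weak_iff not_path_weak_iff memoryless_suffices_path_until[OF wf])

end

theorem theorem5p19:
  fixes M :: "('a::finite, 's::finite, 'act::finite, 'p::finite, 'l::finite_distrib_lattice_complete) mvcgs"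
  assumes "wf_mvcgs M"
  shows "sem M True \<phi> q = sem M False \<phi> q"
proof -
  have "sem M True \<phi> = sem M False \<phi>"
    by (induction \<phi>) (rule ext, simp add: assms coop_path_next_memoryless coop_path_until_memoryless
      coop_path_weak_memoryless dual_path_next_memoryless dual_path_until_memoryless
      dual_path_weak_memoryless)+
  then show ?thesis by simp
qed

end
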